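(* Let $X$ and $Y$ be topological spaces with $Y$ compact, and let $f:\mathrm{Closed}(X)\to\mathrm{Closed}(Y)$ be admissible. Then $X+_fY$ is compact if and only if $f(A)\neq\emptyset$ for every non-compact $A\in\mathrm{Closed}(X)$.
   Context: $\mathrm{Closed}(X)$ is the set of closed subsets of $X$. $f$ is admissible if $f(\emptyset)=\emptyset$ and $f$ preserves finite unions. $X+_fY$ is $X\sqcup Y$ with closed sets the $D$ such that $D\cap X$ is closed in $X$, $D\cap Y$ is closed in $Y$ and $f(D\cap X)\subseteq D$. *)

theory Defs
  imports "HOL-Analysis.Analysis"
begin

text \<open>Closed(X) is represented by the predicate closedin X. A map
 f : Closed(X) -> Closed(Y) is a function on sets that sends closed sets
 of X to closed sets of Y.\<close>

definition closed_map_between :: "'a topology \<Rightarrow> 'b topology \<Rightarrow> ('a set \<Rightarrow> 'b set) \<Rightarrow> bool" where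
  "closed_map_between X Y f \<longleftrightarrow> (\<forall>A. closedin X A \<longrightarrow> closedin Y (f A))"

definition admissible :: "'a topology \<Rightarrow> ('a set \<Rightarrow> 'b set) \<Rightarrow> bool" where
  "admissible X f \<longleftrightarrow> f {} = {} \<and>
     (\<forall>A B. closedin X A \<longrightarrow> closedin X B \<longrightarrow> f (A \<union> B) = f A \<union> f B)"

definition glue_closed :: "'a topology \<Rightarrow> 'b topology \<Rightarrow> ('a set \<Rightarrow> 'b set) \<Rightarrow> ('a + 'b) set \<Rightarrow> bool" where
  "glue_closed X Y f D \<longleftrightarrow>
     D \<subseteq> topspace X <+> topspace Y \<and>
     closedin X {x. Inl x \<in> D} \<and>
     closedin Y {y. Inr y \<in> D} \<and>
     Inr ` f {x. Inl x \<in> D} \<subseteq> D"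

definition glue_top :: "'a topology \<Rightarrow> 'b topology \<Rightarrow> ('a set \<Rightarrow> 'b set) \<Rightarrow> ('a + 'b) topology" where
  "glue_top X Y f = topology (\<lambda>U. U \<subseteq> topspace X <+> topspace Y \<and>
       glue_closed X Y f ((topspace X <+> topspace Y) - U))"

end

theory Submission
  imports Defs
begin

text \<open>The points of \<open>Y\<close> form a compact subset of \<open>X +\<^sub>f Y\<close>, and a closed set missing them
  is of the form \<open>Inl ` A\<close> with \<open>A\<close> closed and \<open>f A = {}\<close>; on such sets the gluing topology
  agrees with that of \<open>X\<close>. So \<open>X +\<^sub>f Y\<close> is compact exactly when every closed \<open>A\<close> with
  \<open>f A = {}\<close> is compact: any open cover has a finite subfamily covering \<open>Y\<close>, and what it
  leaves uncovered is such a set.\<close>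

lemma compact_space_if_closed_disjoint_compactin:
  assumes "compactin X K"
    and "\<And>C. closedin X C \<Longrightarrow> C \<inter> K = {} \<Longrightarrow> compactin X C"
  shows "compact_space X"
  unfolding compact_space_alt
proof (intro allI impI)
  fix \<U> assume \<U>: "(\<forall>U\<in>\<U>. openin X U) \<and> topspace X \<subseteq> \<Union>\<U>"
  then obtain \<F> where \<F>: "finite \<F>" "\<F> \<subseteq> \<U>" "K \<subseteq> \<Union>\<F>"
    using assms(1) compactin_subset_topspace compactinD by (metis subset_trans)
  define C where "C = topspace X - \<Union>\<F>"
  have "closedin X C"
    unfolding C_def using \<F>(2) \<U> by blast
  moreover have "C \<inter> K = {}"
    unfolding C_def using \<F>(3) by blast
  ultimately obtain \<G> where \<G>: "finite \<G>" "\<G> \<subseteq> \<U>" "C \<subseteq> \<Union>\<G>"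
    using assms(2) \<U> compactinD closedin_subset by (metis subset_trans)
  have "topspace X \<subseteq> \<Union>(\<F> \<union> \<G>)"
    using \<G>(3) unfolding C_def by blast
  then show "\<exists>\<F>. finite \<F> \<and> \<F> \<subseteq> \<U> \<and> topspace X \<subseteq> \<Union>\<F>"
    using \<F> \<G> by (intro exI[of _ "\<F> \<union> \<G>"]) auto
qed

lemma
  fixes S :: "'a set" and P :: "'a set \<Rightarrow> bool"
  defines "T \<equiv> topology (\<lambda>U. U \<subseteq> S \<and> P (S - U))"
  assumes subset: "\<And>C. P C \<Longrightarrow> C \<subseteq> S"
    and empty: "P {}" and top: "P S"
    and Un: "\<And>C D. P C \<Longrightarrow> P D \<Longrightarrow> P (C \<union> D)"
    and Inter: "\<And>\<C>. \<C> \<noteq> {} \<Longrightarrow> (\<And>C. C \<in> \<C> \<Longrightarrow> P C) \<Longrightarrow> P (\<Inter>\<C>)"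
  shows topspace_topology_from_closed: "topspace T = S"
    and closedin_topology_from_closed: "closedin T = P"
proof -
  let ?L = "\<lambda>U. U \<subseteq> S \<and> P (S - U)"
  have Int: "?L (U \<inter> V)" if "?L U" "?L V" for U V
    using that Un[of "S - U" "S - V"] by (simp add: Diff_Int le_infI1)
  have Union: "?L (\<Union>\<K>)" if \<K>: "\<forall>K\<in>\<K>. ?L K" for \<K>
  proof -
    have "P (S - \<Union>\<K>)"
    proof (cases "\<K> = {}")
      case False
      then have "S - \<Union>\<K> = (\<Inter>K\<in>\<K>. S - K)"
        by blast
      then show ?thesis
        using Inter[of "(\<lambda>K. S - K) ` \<K>"] \<K> False by auto
    qed (simp add: top)
    then show ?thesis
      using \<K> by blast
  qed
  have "istopology ?L"
    unfolding istopology_def using Int Union by blast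
  then have openin_T: "openin T = (\<lambda>U. U \<subseteq> S \<and> P (S - U))"
    unfolding T_def by simp
  show topspace: "topspace T = S"
  proof
    show "topspace T \<subseteq> S"
      using openin_topspace[of T] by (simp add: openin_T)
    show "S \<subseteq> topspace T"
      using empty by (intro openin_subset) (simp add: openin_T)
  qed
  have "closedin T C \<longleftrightarrow> P C" for C
  proof -
    have "closedin T C \<longleftrightarrow> C \<subseteq> S \<and> P (S - (S - C))"
      by (simp add: closedin_def topspace openin_T)
    also have "\<dots> \<longleftrightarrow> P C"
      using subset by (auto simp: double_diff)
    finally show ?thesis .
  qed
  then show "closedin T = P"
    by blast
qed

lemma admissible_mono:
  assumes "admissible X f" "closedin X A" "closedin X B" "A \<subseteq> B"
  shows "f A \<subseteq> f B"
proof -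
  have "f B = f (A \<union> B)"
    using assms(4) by (simp add: sup_absorb2)
  also have "\<dots> = f A \<union> f B"
    using assms unfolding admissible_def by blast
  finally show ?thesis
    by blast
qed

lemma glue_closed_subset:
  "glue_closed X Y f D \<Longrightarrow> D \<subseteq> topspace X <+> topspace Y"
  unfolding glue_closed_def by blast

lemma glue_closed_empty:
  "admissible X f \<Longrightarrow> glue_closed X Y f {}"
  unfolding glue_closed_def admissible_def by auto

lemma glue_closed_topspace:
  assumes "closed_map_between X Y f"
  shows "glue_closed X Y f (topspace X <+> topspace Y)"
proof -
  have "{x. Inl x \<in> topspace X <+> topspace Y} = topspace X"
    and "{y. Inr y \<in> topspace X <+> topspace Y} = topspace Y"
    by auto
  then show ?thesis
    using assms closedin_subset unfolding glue_closed_def closed_map_between_def by fastforce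
qed

lemma glue_closed_Un:
  assumes "admissible X f" "glue_closed X Y f C" "glue_closed X Y f D"
  shows "glue_closed X Y f (C \<union> D)"
proof -
  have Inl_part: "{x. Inl x \<in> C \<union> D} = {x. Inl x \<in> C} \<union> {x. Inl x \<in> D}"
    and Inr_part: "{y. Inr y \<in> C \<union> D} = {y. Inr y \<in> C} \<union> {y. Inr y \<in> D}"
    by auto
  have f_Un: "f ({x. Inl x \<in> C} \<union> {x. Inl x \<in> D}) = f {x. Inl x \<in> C} \<union> f {x. Inl x \<in> D}"
    using assms unfolding admissible_def glue_closed_def by simp
  show ?thesis
    using assms(2,3) unfolding glue_closed_def Inl_part Inr_part f_Un image_Un
    by (intro conjI closedin_Un Un_mono) auto
qed

lemma glue_closed_Inter:
  assumes "admissible X f" "\<D> \<noteq> {}" "\<And>D. D \<in> \<D> \<Longrightarrow> glue_closed X Y f D"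
  shows "glue_closed X Y f (\<Inter>\<D>)"
proof -
  have D: "D \<subseteq> topspace X <+> topspace Y" "closedin X {x. Inl x \<in> D}"
    "closedin Y {y. Inr y \<in> D}" "Inr ` f {x. Inl x \<in> D} \<subseteq> D" if "D \<in> \<D>" for D
    using assms(3)[OF that] unfolding glue_closed_def by blast+
  have "{x. Inl x \<in> \<Inter>\<D>} = (\<Inter>D\<in>\<D>. {x. Inl x \<in> D})"
    and "{y. Inr y \<in> \<Inter>\<D>} = (\<Inter>D\<in>\<D>. {y. Inr y \<in> D})"
    by auto
  then have closed: "closedin X {x. Inl x \<in> \<Inter>\<D>}" "closedin Y {y. Inr y \<in> \<Inter>\<D>}"
    using assms(2) D(2,3) by auto
  have "Inr ` f {x. Inl x \<in> \<Inter>\<D>} \<subseteq> D" if "D \<in> \<D>" for D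
  proof -
    have "f {x. Inl x \<in> \<Inter>\<D>} \<subseteq> f {x. Inl x \<in> D}"
      using that D(2) closed(1) by (intro admissible_mono[OF assms(1)]) auto
    then show ?thesis
      using D(4)[OF that] by blast
  qed
  then show ?thesis
    using closed assms(2) D(1) unfolding glue_closed_def by blast
qed

context
  fixes X :: "'a topology" and Y :: "'b topology" and f :: "'a set \<Rightarrow> 'b set"
  assumes admissible: "admissible X f" and closed_map: "closed_map_between X Y f"
begin

lemmas glue_closed_properties =
  glue_closed_subset glue_closed_empty[OF admissible] glue_closed_topspace[OF closed_map]
  glue_closed_Un[OF admissible] glue_closed_Inter[OF admissible]

lemma topspace_glue_top: "topspace (glue_top X Y f) = topspace X <+> topspace Y"
  unfolding glue_top_def
  by (rule topspace_topology_from_closed[where P = "glue_closed X Y f", OF glue_closed_properties])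

lemma closedin_glue_top: "closedin (glue_top X Y f) = glue_closed X Y f"
  unfolding glue_top_def
  by (rule closedin_topology_from_closed[where P = "glue_closed X Y f", OF glue_closed_properties])

lemma continuous_map_Inl_glue_top: "continuous_map X (glue_top X Y f) Inl"
proof -
  have "{x \<in> topspace X. Inl x \<in> D} = {x. Inl x \<in> D}" if "glue_closed X Y f D" for D
    using glue_closed_subset[OF that] by blast
  then show ?thesis
    unfolding continuous_map_closedin topspace_glue_top closedin_glue_top
    by (auto simp: glue_closed_def)
qed

lemma continuous_map_Inr_glue_top: "continuous_map Y (glue_top X Y f) Inr"
proof -
  have "{y \<in> topspace Y. Inr y \<in> D} = {y. Inr y \<in> D}" if "glue_closed X Y f D" for D
    using glue_closed_subset[OF that] by blast
  then show ?thesis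
    unfolding continuous_map_closedin topspace_glue_top closedin_glue_top
    by (auto simp: glue_closed_def)
qed

lemma closedin_glue_top_Inl_image:
  assumes "A \<subseteq> topspace X"
  shows "closedin (glue_top X Y f) (Inl ` A) \<longleftrightarrow> closedin X A \<and> f A = {}"
proof -
  have "{x. Inl x \<in> (Inl ` A :: ('a + 'b) set)} = A" and "{y. Inr y \<in> (Inl ` A :: ('a + 'b) set)} = {}"
    by auto
  then show ?thesis
    using assms unfolding closedin_glue_top glue_closed_def by auto
qed

lemma closedin_glue_top_disjoint_Inr:
  assumes "closedin (glue_top X Y f) C" "C \<inter> Inr ` topspace Y = {}"
  obtains A where "C = Inl ` A" "closedin X A" "f A = {}"
proof
  define A where "A = {x. Inl x \<in> C}"
  have "C \<subseteq> topspace X <+> topspace Y"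
    using assms(1) closedin_subset topspace_glue_top by blast
  then have "C = Inl ` A" and "A \<subseteq> topspace X"
    using assms(2) unfolding A_def by force+
  then show "C = Inl ` A" "closedin X A" "f A = {}"
    using assms(1) closedin_glue_top_Inl_image[of A] by simp_all
qed

lemma compactin_glue_top_Inl_image:
  assumes "closedin X A" "f A = {}"
  shows "compactin (glue_top X Y f) (Inl ` A) \<longleftrightarrow> compactin X A"
proof
  let ?S = "subtopology (glue_top X Y f) (Inl ` A)"
  have A: "A \<subseteq> topspace X"
    using assms(1) closedin_subset by blast
  have continuous_projl: "continuous_map ?S X projl"
    unfolding continuous_map_closedin
  proof (intro conjI allI impI)
    have topspace_S: "topspace ?S = Inl ` A"
      using A by (auto simp: topspace_glue_top)
    then show "projl \<in> topspace ?S \<rightarrow> topspace X"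
      using A by auto
    fix C assume "closedin X C"
    then have "f (A \<inter> C) \<subseteq> f A"
      using assms(1) by (intro admissible_mono[OF admissible]) auto
    then have "closedin (glue_top X Y f) (Inl ` (A \<inter> C))"
      using A assms \<open>closedin X C\<close> by (subst closedin_glue_top_Inl_image) auto
    moreover have "{z \<in> topspace ?S. projl z \<in> C} = Inl ` (A \<inter> C)"
      unfolding topspace_S by auto
    ultimately show "closedin ?S {z \<in> topspace ?S. projl z \<in> C}"
      by (metis closedin_subset_topspace image_mono inf_le1)
  qed
  assume "compactin (glue_top X Y f) (Inl ` A)"
  then have "compactin ?S (Inl ` A)"
    by (simp add: compactin_subtopology)
  from image_compactin[OF this continuous_projl] show "compactin X A"
    by (simp add: image_image)
next
  assume "compactin X A"
  then show "compactin (glue_top X Y f) (Inl ` A)"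
    using continuous_map_Inl_glue_top by (rule image_compactin)
qed

end

theorem mainTheorem12:
  fixes X :: "'a topology" and Y :: "'b topology" and f :: "'a set \<Rightarrow> 'b set"
  assumes "compact_space Y"
    and "closed_map_between X Y f"
    and "admissible X f"
  shows "compact_space (glue_top X Y f) \<longleftrightarrow>
         (\<forall>A. closedin X A \<and> \<not> compactin X A \<longrightarrow> f A \<noteq> {})"
proof
  let ?G = "glue_top X Y f"
  note glue = closedin_glue_top_Inl_image[OF assms(3,2)] compactin_glue_top_Inl_image[OF assms(3,2)]
  show "\<forall>A. closedin X A \<and> \<not> compactin X A \<longrightarrow> f A \<noteq> {}" if "compact_space ?G"
  proof (intro allI impI notI)
    fix A assume A: "closedin X A \<and> \<not> compactin X A" and "f A = {}"
    then have "closedin ?G (Inl ` A)"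
      using glue(1)[OF closedin_subset] by simp
    then have "compactin ?G (Inl ` A)"
      by (rule closedin_compact_space[OF that])
    then show False
      using A \<open>f A = {}\<close> glue(2)[of A] by simp
  qed
  assume non_compact: "\<forall>A. closedin X A \<and> \<not> compactin X A \<longrightarrow> f A \<noteq> {}"
  show "compact_space ?G"
  proof (rule compact_space_if_closed_disjoint_compactin)
    show "compactin ?G (Inr ` topspace Y)"
      using assms(1) continuous_map_Inr_glue_top[OF assms(3,2)]
      unfolding compact_space_def by (rule image_compactin)
    fix C assume "closedin ?G C" "C \<inter> Inr ` topspace Y = {}"
    then obtain A where C_eq: "C = Inl ` A" and "closedin X A" "f A = {}"
      by (rule closedin_glue_top_disjoint_Inr[OF assms(3,2)])
    then have "compactin X A"
      using non_compact by blast
    then show "compactin ?G C"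
      unfolding C_eq using glue(2) \<open>closedin X A\<close> \<open>f A = {}\<close> by simp
  qed
qed

end
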